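(* Let $Q$ be a left automorphic loop, $S\le Q$, and $x,y\in Q$. If $x\in xS\cap yS$, then $x\backslash(xS\cap yS)=\{x\backslash z : z\in xS\cap yS\}$ is a subloop of $S$.
   Context: A loop is left automorphic if every left inner mapping (element of the stabilizer of $1$ in the group generated by the left translations $L_x:y\mapsto xy$) is an automorphism. $x\backslash y=L_x^{-1}(y)$; $xS=\{xs:s\in S\}$. *)

theory Defs
  imports Main
begin

definition loop :: "'a set \<Rightarrow> ('a \<Rightarrow> 'a \<Rightarrow> 'a) \<Rightarrow> 'a \<Rightarrow> bool" where
  "loop Q m e \<longleftrightarrow>
     e \<in> Q \<and>
     (\<forall>a\<in>Q. \<forall>b\<in>Q. m a b \<in> Q) \<and>
     (\<forall>a\<in>Q. m e a = a \<and> m a e = a) \<and>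
     (\<forall>a\<in>Q. \<forall>b\<in>Q. \<exists>!x. x \<in> Q \<and> m a x = b) \<and>
     (\<forall>a\<in>Q. \<forall>b\<in>Q. \<exists>!y. y \<in> Q \<and> m y a = b)"

definition ldiv :: "'a set \<Rightarrow> ('a \<Rightarrow> 'a \<Rightarrow> 'a) \<Rightarrow> 'a \<Rightarrow> 'a \<Rightarrow> 'a" where
  "ldiv Q m x y = (THE z. z \<in> Q \<and> m x z = y)"

definition rdiv :: "'a set \<Rightarrow> ('a \<Rightarrow> 'a \<Rightarrow> 'a) \<Rightarrow> 'a \<Rightarrow> 'a \<Rightarrow> 'a" where
  "rdiv Q m y x = (THE z. z \<in> Q \<and> m z x = y)"

text \<open>Left translations and their inverses, as permutations of Q (identity outside Q).\<close>

definition Ltr :: "'a set \<Rightarrow> ('a \<Rightarrow> 'a \<Rightarrow> 'a) \<Rightarrow> 'a \<Rightarrow> 'a \<Rightarrow> 'a" where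
  "Ltr Q m x = (\<lambda>y. if y \<in> Q then m x y else y)"

definition Ltr_inv :: "'a set \<Rightarrow> ('a \<Rightarrow> 'a \<Rightarrow> 'a) \<Rightarrow> 'a \<Rightarrow> 'a \<Rightarrow> 'a" where
  "Ltr_inv Q m x = (\<lambda>y. if y \<in> Q then ldiv Q m x y else y)"

inductive_set left_mult_group :: "'a set \<Rightarrow> ('a \<Rightarrow> 'a \<Rightarrow> 'a) \<Rightarrow> ('a \<Rightarrow> 'a) set"
  for Q m where
  lmg_id: "id \<in> left_mult_group Q m"
| lmg_L: "\<lbrakk>g \<in> left_mult_group Q m; x \<in> Q\<rbrakk> \<Longrightarrow> Ltr Q m x \<circ> g \<in> left_mult_group Q m"
| lmg_Linv: "\<lbrakk>g \<in> left_mult_group Q m; x \<in> Q\<rbrakk> \<Longrightarrow> Ltr_inv Q m x \<circ> g \<in> left_mult_group Q m"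

definition left_inner_maps :: "'a set \<Rightarrow> ('a \<Rightarrow> 'a \<Rightarrow> 'a) \<Rightarrow> 'a \<Rightarrow> ('a \<Rightarrow> 'a) set" where
  "left_inner_maps Q m e = {g \<in> left_mult_group Q m. g e = e}"

definition loop_aut :: "'a set \<Rightarrow> ('a \<Rightarrow> 'a \<Rightarrow> 'a) \<Rightarrow> ('a \<Rightarrow> 'a) \<Rightarrow> bool" where
  "loop_aut Q m f \<longleftrightarrow> bij_betw f Q Q \<and> (\<forall>a\<in>Q. \<forall>b\<in>Q. f (m a b) = m (f a) (f b))"

definition left_automorphic_loop :: "'a set \<Rightarrow> ('a \<Rightarrow> 'a \<Rightarrow> 'a) \<Rightarrow> 'a \<Rightarrow> bool" where
  "left_automorphic_loop Q m e \<longleftrightarrow>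
     loop Q m e \<and> (\<forall>f \<in> left_inner_maps Q m e. loop_aut Q m f)"

definition subloop :: "'a set \<Rightarrow> ('a \<Rightarrow> 'a \<Rightarrow> 'a) \<Rightarrow> 'a \<Rightarrow> 'a set \<Rightarrow> bool" where
  "subloop Q m e S \<longleftrightarrow>
     S \<subseteq> Q \<and> e \<in> S \<and>
     (\<forall>a\<in>S. \<forall>b\<in>S. m a b \<in> S \<and> ldiv Q m a b \<in> S \<and> rdiv Q m a b \<in> S)"

end

theory Submission
  imports Defs
begin

text \<open>Write \<open>x = y s\<^sub>0\<close> with \<open>s\<^sub>0 \<in> S\<close>. Then \<open>x\<backslash>(xS \<inter> yS) = S \<inter> \<phi>(S)\<close> for
  \<open>\<phi> = L\<^sub>x\<^sup>-\<^sup>1 L\<^sub>y L\<^sub>s\<^sub>0\<close>, which fixes \<open>1\<close> and hence is an automorphism of the left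
  automorphic loop. So \<open>\<phi>(S)\<close> is a subloop, and so is its intersection with \<open>S\<close>.\<close>

lemma loop_closed: "loop Q m e \<Longrightarrow> a \<in> Q \<Longrightarrow> b \<in> Q \<Longrightarrow> m a b \<in> Q"
  by (simp add: loop_def)

lemma loop_unit: "loop Q m e \<Longrightarrow> e \<in> Q"
  by (simp add: loop_def)

lemma loop_left_unit: "loop Q m e \<Longrightarrow> a \<in> Q \<Longrightarrow> m e a = a"
  and loop_right_unit: "loop Q m e \<Longrightarrow> a \<in> Q \<Longrightarrow> m a e = a"
  by (simp_all add: loop_def)

lemma ldiv_closed_cancel:
  assumes "loop Q m e" "a \<in> Q" "b \<in> Q"
  shows "ldiv Q m a b \<in> Q \<and> m a (ldiv Q m a b) = b"
proof -
  have "\<exists>!z. z \<in> Q \<and> m a z = b" using assms by (simp add: loop_def)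
  then show ?thesis unfolding ldiv_def by (rule theI')
qed

lemma ldiv_eqI:
  assumes "loop Q m e" "a \<in> Q" "z \<in> Q" "m a z = b"
  shows "ldiv Q m a b = z"
proof -
  have "\<exists>!z. z \<in> Q \<and> m a z = b"
    using assms loop_closed[OF assms(1-3)] by (simp add: loop_def)
  then show ?thesis unfolding ldiv_def using assms(3,4) by (auto intro: the1_equality)
qed

lemma ldiv_mult: "loop Q m e \<Longrightarrow> a \<in> Q \<Longrightarrow> b \<in> Q \<Longrightarrow> ldiv Q m a (m a b) = b"
  by (rule ldiv_eqI) auto

lemma rdiv_closed_cancel:
  assumes "loop Q m e" "a \<in> Q" "b \<in> Q"
  shows "rdiv Q m b a \<in> Q \<and> m (rdiv Q m b a) a = b"
proof -
  have "\<exists>!z. z \<in> Q \<and> m z a = b" using assms by (simp add: loop_def)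
  then show ?thesis unfolding rdiv_def by (rule theI')
qed

lemma rdiv_eqI:
  assumes "loop Q m e" "a \<in> Q" "z \<in> Q" "m z a = b"
  shows "rdiv Q m b a = z"
proof -
  have "\<exists>!z. z \<in> Q \<and> m z a = b"
    using assms loop_closed[OF assms(1,3,2)] by (simp add: loop_def)
  then show ?thesis unfolding rdiv_def using assms(3,4) by (auto intro: the1_equality)
qed

lemma loop_aut_closed: "loop_aut Q m f \<Longrightarrow> a \<in> Q \<Longrightarrow> f a \<in> Q"
  by (auto simp: loop_aut_def bij_betw_def)

lemma loop_aut_mult: "loop_aut Q m f \<Longrightarrow> a \<in> Q \<Longrightarrow> b \<in> Q \<Longrightarrow> f (m a b) = m (f a) (f b)"
  by (simp add: loop_aut_def)

lemma loop_aut_ldiv: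
  assumes "loop Q m e" "loop_aut Q m f" "a \<in> Q" "b \<in> Q"
  shows "f (ldiv Q m a b) = ldiv Q m (f a) (f b)"
proof -
  have d: "ldiv Q m a b \<in> Q" "m a (ldiv Q m a b) = b"
    using ldiv_closed_cancel[OF assms(1,3,4)] by auto
  have "m (f a) (f (ldiv Q m a b)) = f b"
    using loop_aut_mult[OF assms(2,3) d(1)] d(2) by simp
  then show ?thesis
    using ldiv_eqI[OF assms(1)] loop_aut_closed[OF assms(2)] assms(3) d(1) by metis
qed

lemma loop_aut_rdiv:
  assumes "loop Q m e" "loop_aut Q m f" "a \<in> Q" "b \<in> Q"
  shows "f (rdiv Q m a b) = rdiv Q m (f a) (f b)"
proof -
  have d: "rdiv Q m a b \<in> Q" "m (rdiv Q m a b) b = a"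
    using rdiv_closed_cancel[OF assms(1,4,3)] by auto
  have "m (f (rdiv Q m a b)) (f b) = f a"
    using loop_aut_mult[OF assms(2) d(1) assms(4)] d(2) by simp
  then show ?thesis
    using rdiv_eqI[OF assms(1)] loop_aut_closed[OF assms(2)] assms(4) d(1) by metis
qed

lemma loop_aut_unit:
  assumes "loop Q m e" "loop_aut Q m f"
  shows "f e = e"
proof -
  have eQ: "e \<in> Q" using assms(1) by (rule loop_unit)
  have "f e = f (ldiv Q m e e)" using ldiv_eqI[OF assms(1) eQ eQ] loop_left_unit[OF assms(1) eQ] by simp
  also have "\<dots> = ldiv Q m (f e) (f e)" using loop_aut_ldiv[OF assms eQ eQ] .
  also have "\<dots> = e"
    using ldiv_eqI[OF assms(1) loop_aut_closed[OF assms(2) eQ] eQ] loop_right_unit[OF assms(1)]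
      loop_aut_closed[OF assms(2) eQ] by simp
  finally show ?thesis .
qed

lemma subloop_image_loop_aut:
  assumes "loop Q m e" "loop_aut Q m f" "subloop Q m e S"
  shows "subloop Q m e (f ` S)"
  unfolding subloop_def
proof (intro conjI ballI)
  have SQ: "S \<subseteq> Q" and eS: "e \<in> S"
    using assms(3) by (auto simp: subloop_def)
  show "f ` S \<subseteq> Q" using SQ loop_aut_closed[OF assms(2)] by blast
  show "e \<in> f ` S" using eS loop_aut_unit[OF assms(1,2)] by (metis image_eqI)
next
  fix a' b' assume "a' \<in> f ` S" "b' \<in> f ` S"
  then obtain a b where ab: "a \<in> S" "b \<in> S" "a' = f a" "b' = f b" by blast
  have cl: "m a b \<in> S" "ldiv Q m a b \<in> S" "rdiv Q m a b \<in> S"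
    and Q: "a \<in> Q" "b \<in> Q"
    using assms(3) ab(1,2) by (auto simp: subloop_def)
  show "m a' b' \<in> f ` S"
    using cl(1) loop_aut_mult[OF assms(2) Q] ab(3,4) by (metis image_eqI)
  show "ldiv Q m a' b' \<in> f ` S"
    using cl(2) loop_aut_ldiv[OF assms(1,2) Q] ab(3,4) by (metis image_eqI)
  show "rdiv Q m a' b' \<in> f ` S"
    using cl(3) loop_aut_rdiv[OF assms(1,2) Q] ab(3,4) by (metis image_eqI)
qed

lemma subloop_Int: "subloop Q m e S \<Longrightarrow> subloop Q m e T \<Longrightarrow> subloop Q m e (S \<inter> T)"
  by (auto simp: subloop_def)

lemma subloop_left_translate_eq:
  assumes "loop Q m e" "subloop Q m e S" "s \<in> S"
  shows "m s ` S = S"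
proof
  show "m s ` S \<subseteq> S" using assms(2,3) by (auto simp: subloop_def)
  have SQ: "S \<subseteq> Q" using assms(2) by (simp add: subloop_def)
  have "b = m s (ldiv Q m s b) \<and> ldiv Q m s b \<in> S" if "b \<in> S" for b
  proof
    show "b = m s (ldiv Q m s b)"
      using ldiv_closed_cancel[OF assms(1)] that assms(3) SQ by (metis subsetD)
    show "ldiv Q m s b \<in> S" using that assms(2,3) by (simp add: subloop_def)
  qed
  then show "S \<subseteq> m s ` S" by blast
qed

lemma ldiv_image_Int_left_cosets:
  assumes "loop Q m e" "x \<in> Q" "y \<in> Q" "S \<subseteq> Q"
  shows "ldiv Q m x ` (m x ` S \<inter> m y ` S) = S \<inter> (\<lambda>b. ldiv Q m x (m y b)) ` S"
proof (intro equalityI subsetI)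
  fix d assume "d \<in> ldiv Q m x ` (m x ` S \<inter> m y ` S)"
  then obtain a b where ab: "a \<in> S" "b \<in> S" "m x a = m y b" "d = ldiv Q m x (m x a)"
    by (auto simp del: ldiv_def)
  then have "d = a" using ldiv_mult[OF assms(1,2)] assms(4) by blast
  with ab show "d \<in> S \<inter> (\<lambda>b. ldiv Q m x (m y b)) ` S" by (metis IntI image_eqI)
next
  fix d assume "d \<in> S \<inter> (\<lambda>b. ldiv Q m x (m y b)) ` S"
  then obtain b where b: "d \<in> S" "b \<in> S" "d = ldiv Q m x (m y b)" by auto
  have "m y b \<in> Q" using loop_closed[OF assms(1,3)] b(2) assms(4) by blast
  then have "m x d = m y b" using ldiv_closed_cancel[OF assms(1,2)] b(3) by simp
  moreover have "d = ldiv Q m x (m x d)" using ldiv_mult[OF assms(1,2)] b(1) assms(4) by auto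
  ultimately show "d \<in> ldiv Q m x ` (m x ` S \<inter> m y ` S)"
    using b by (metis IntI image_eqI)
qed

lemma left_inner_map_from_factorization:
  assumes "loop Q m e" "x \<in> Q" "y \<in> Q" "s \<in> Q" "m y s = x"
  shows "\<exists>\<phi>\<in>left_inner_maps Q m e. \<forall>c\<in>Q. \<phi> c = ldiv Q m x (m y (m s c))"
proof
  let ?\<phi> = "Ltr_inv Q m x \<circ> (Ltr Q m y \<circ> (Ltr Q m s \<circ> id))"
  have on_Q: "\<forall>c\<in>Q. ?\<phi> c = ldiv Q m x (m y (m s c))"
    using loop_closed[OF assms(1)] assms(3,4) by (simp add: Ltr_def Ltr_inv_def)
  have eQ: "e \<in> Q" using assms(1) by (rule loop_unit)
  have "?\<phi> e = ldiv Q m x x"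
    using on_Q eQ loop_right_unit[OF assms(1,4)] assms(5) by simp
  also have "\<dots> = e"
    using ldiv_eqI[OF assms(1,2) eQ] loop_right_unit[OF assms(1,2)] by simp
  finally have "?\<phi> e = e" .
  moreover have "?\<phi> \<in> left_mult_group Q m"
    by (intro left_mult_group.intros assms(2-4))
  ultimately show "?\<phi> \<in> left_inner_maps Q m e" by (simp add: left_inner_maps_def)
  show "\<forall>c\<in>Q. ?\<phi> c = ldiv Q m x (m y (m s c))" by (fact on_Q)
qed

theorem corollary6p6:
  fixes Q :: "'a set" and m :: "'a \<Rightarrow> 'a \<Rightarrow> 'a" and e :: 'a
    and S :: "'a set" and x y :: 'a
  assumes "left_automorphic_loop Q m e"
    and "subloop Q m e S"
    and "x \<in> Q" and "y \<in> Q"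
    and "x \<in> (m x ` S) \<inter> (m y ` S)"
  shows "subloop Q m e (ldiv Q m x ` ((m x ` S) \<inter> (m y ` S)))
         \<and> ldiv Q m x ` ((m x ` S) \<inter> (m y ` S)) \<subseteq> S"
proof -
  have L: "loop Q m e" using assms(1) by (simp add: left_automorphic_loop_def)
  have SQ: "S \<subseteq> Q" using assms(2) by (simp add: subloop_def)
  obtain s where s: "s \<in> S" "m y s = x" using assms(5) by auto
  obtain \<phi> where \<phi>: "\<phi> \<in> left_inner_maps Q m e" "\<forall>c\<in>Q. \<phi> c = ldiv Q m x (m y (m s c))"
    using left_inner_map_from_factorization[OF L assms(3,4) _ s(2)] s(1) SQ by blast
  have aut: "loop_aut Q m \<phi>" using assms(1) \<phi>(1) by (simp add: left_automorphic_loop_def)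
  have "(\<lambda>b. ldiv Q m x (m y b)) ` S = (\<lambda>b. ldiv Q m x (m y b)) ` m s ` S"
    using subloop_left_translate_eq[OF L assms(2) s(1)] by simp
  also have "\<dots> = \<phi> ` S" using \<phi>(2) SQ by (force simp: image_image intro: image_cong)
  finally have "ldiv Q m x ` (m x ` S \<inter> m y ` S) = S \<inter> \<phi> ` S"
    using ldiv_image_Int_left_cosets[OF L assms(3,4) SQ] by simp
  then show ?thesis
    using subloop_Int[OF assms(2) subloop_image_loop_aut[OF L aut assms(2)]] by simp
qed

end
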